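(* Let $n,m\ge 3$, let $G=(V,E)=P_n\square P_m$ be the grid graph, and let $R\subseteq V$. If every vertex of $G$ has a locally resolved neighbourhood with respect to $R$, then $R$ is a resolving set for $G$.
   Context: The grid graph $P_n\square P_m$ has vertex set $\{(i,j):0\le i\le n-1,\ 0\le j\le m-1\}$, with $(i,j)$ adjacent to $(k,l)$ iff $|i-k|+|j-l|=1$; the distance is $d((i,j),(k,l))=|i-k|+|j-l|$. A vertex $w$ resolves two vertices $u,v$ if $d(w,u)\ne d(w,v)$. A set $R$ is resolving if every pair of distinct vertices is resolved by some vertex of $R$. A vertex $x$ has a locally resolved neighbourhood with respect to $R$ if every pair of distinct neighbours of $x$ is resolved by some vertex of $R$. *)

theory Defs
  imports Main
begin

definition grid_vertices :: "nat \<Rightarrow> nat \<Rightarrow> (nat \<times> nat) set" where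
  "grid_vertices n m = {(i, j). i < n \<and> j < m}"

definition grid_dist :: "nat \<times> nat \<Rightarrow> nat \<times> nat \<Rightarrow> nat" where
  "grid_dist u v = nat \<bar>int (fst u) - int (fst v)\<bar> + nat \<bar>int (snd u) - int (snd v)\<bar>"

definition grid_adj :: "nat \<times> nat \<Rightarrow> nat \<times> nat \<Rightarrow> bool" where
  "grid_adj u v \<longleftrightarrow> grid_dist u v = 1"

definition grid_neighbours :: "nat \<Rightarrow> nat \<Rightarrow> nat \<times> nat \<Rightarrow> (nat \<times> nat) set" where
  "grid_neighbours n m x = {y \<in> grid_vertices n m. grid_adj x y}"

definition resolves :: "nat \<times> nat \<Rightarrow> nat \<times> nat \<Rightarrow> nat \<times> nat \<Rightarrow> bool" where
  "resolves w u v \<longleftrightarrow> grid_dist w u \<noteq> grid_dist w v"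

definition resolving_set :: "nat \<Rightarrow> nat \<Rightarrow> (nat \<times> nat) set \<Rightarrow> bool" where
  "resolving_set n m R \<longleftrightarrow> R \<subseteq> grid_vertices n m \<and>
     (\<forall>u \<in> grid_vertices n m. \<forall>v \<in> grid_vertices n m. u \<noteq> v \<longrightarrow> (\<exists>w \<in> R. resolves w u v))"

definition locally_resolved :: "nat \<Rightarrow> nat \<Rightarrow> (nat \<times> nat) set \<Rightarrow> nat \<times> nat \<Rightarrow> bool" where
  "locally_resolved n m R x \<longleftrightarrow>
     (\<forall>u \<in> grid_neighbours n m x. \<forall>v \<in> grid_neighbours n m x. u \<noteq> v \<longrightarrow> (\<exists>w \<in> R. resolves w u v))"

end

theory Submission
  imports Defs
begin

text \<open>
  Work in the integer plane with the \<open>\<ell>\<^sub>1\<close> metric. If \<open>u\<close> and \<open>v\<close> are at odd distance,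
  no point is equidistant from them (parity), so every vertex resolves them and it only
  matters that \<open>R\<close> is nonempty. If the distance is even, there are two neighbours \<open>p\<close>,
  \<open>q\<close> of a common vertex \<open>x\<close>, all inside the bounding box of \<open>u\<close> and \<open>v\<close>, such that
  the bisector of \<open>u, v\<close> is contained in the bisector of \<open>p, q\<close>; a vertex of \<open>R\<close>
  resolving \<open>p, q\<close> then resolves \<open>u, v\<close>. Up to the symmetries of the plane \<open>u\<close> lies
  weakly south-west of \<open>v\<close> with the horizontal offset dominating, and \<open>x\<close> is the point
  of the lower row in the midpoint column.
\<close>

definition manhattan :: "int \<times> int \<Rightarrow> int \<times> int \<Rightarrow> int" where
  "manhattan u v = \<bar>fst u - fst v\<bar> + \<bar>snd u - snd v\<bar>"

definition bisector :: "int \<times> int \<Rightarrow> int \<times> int \<Rightarrow> (int \<times> int) set" where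
  "bisector u v = {w. manhattan w u = manhattan w v}"

definition bounding_box :: "int \<times> int \<Rightarrow> int \<times> int \<Rightarrow> (int \<times> int) set" where
  "bounding_box u v = {w.
     min (fst u) (fst v) \<le> fst w \<and> fst w \<le> max (fst u) (fst v) \<and>
     min (snd u) (snd v) \<le> snd w \<and> snd w \<le> max (snd u) (snd v)}"

definition locally_refined :: "int \<times> int \<Rightarrow> int \<times> int \<Rightarrow> bool" where
  "locally_refined u v \<longleftrightarrow>
     (\<exists>x p q. x \<in> bounding_box u v \<and> p \<in> bounding_box u v \<and> q \<in> bounding_box u v \<and>
       manhattan x p = 1 \<and> manhattan x q = 1 \<and> p \<noteq> q \<and> bisector u v \<subseteq> bisector p q)"

lemma bisector_commute: "bisector u v = bisector v u"
  unfolding bisector_def by auto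

lemma bounding_box_commute: "bounding_box u v = bounding_box v u"
  unfolding bounding_box_def by (auto simp: min.commute max.commute)

lemma locally_refined_commute: "locally_refined u v \<Longrightarrow> locally_refined v u"
  unfolding locally_refined_def by (simp add: bisector_commute bounding_box_commute)

lemma even_abs_plus: "even (\<bar>t::int\<bar> + t)"
  by (cases "t \<ge> 0") auto

lemma even_manhattan_triangle: "even (manhattan w u + manhattan w v + manhattan u v)"
proof -
  have "manhattan w u + manhattan w v + manhattan u v
      = (\<bar>fst w - fst u\<bar> + (fst w - fst u)) + (\<bar>snd w - snd u\<bar> + (snd w - snd u))
      + (\<bar>fst w - fst v\<bar> + (fst w - fst v)) + (\<bar>snd w - snd v\<bar> + (snd w - snd v))
      + (\<bar>fst u - fst v\<bar> + (fst u - fst v)) + (\<bar>snd u - snd v\<bar> + (snd u - snd v))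
      - 2 * (fst w + snd w - fst v - snd v)"
    unfolding manhattan_def by simp
  also have "even \<dots>"
    by (intro dvd_add dvd_diff even_abs_plus dvd_triv_left)
  finally show ?thesis .
qed

lemma bisector_empty_if_odd:
  assumes "odd (manhattan u v)"
  shows "bisector u v = {}"
proof -
  have "manhattan w u \<noteq> manhattan w v" for w
    using even_manhattan_triangle[of w u v] assms by auto
  then show ?thesis unfolding bisector_def by blast
qed

lemma locally_refined_dominant:
  fixes a b c d :: int
  assumes "(a, b) \<noteq> (c, d)" "a \<le> c" "b \<le> d" "d - b \<le> c - a" "even (manhattan (a, b) (c, d))"
  shows "locally_refined (a, b) (c, d)"
proof -
  have "manhattan (a, b) (c, d) = (c - a) + (d - b)"
    using assms(2,3) unfolding manhattan_def by simp
  then obtain k where "(c - a) + (d - b) = 2 * k"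
    using assms(5) by (metis evenE)
  then obtain i where i: "2 * i = a + c + d - b"
    by (intro that[of "k + a"]) simp
  show ?thesis
  proof (cases "b = d")
    case True
    have "bisector (a, b) (c, d) \<subseteq> bisector (i - 1, b) (i + 1, b)"
      using assms(1-4) True i unfolding bisector_def manhattan_def by (auto simp: abs_if split: if_splits)
    then show ?thesis
      using assms(1-4) True i unfolding locally_refined_def bounding_box_def manhattan_def
      by (intro exI[of _ "(i, b)"] exI[of _ "(i - 1, b)"] exI[of _ "(i + 1, b)"]) auto
  next
    case False
    txt \<open>Inside the strip \<open>b \<le> w\<^sub>2 \<le> d\<close> the bisector of \<open>u, v\<close> is the diagonal
      \<open>w\<^sub>1 + w\<^sub>2 = i + b\<close>; below and above the strip it consists of vertical rays in the
      columns \<open>i\<close> and \<open>i - (d - b)\<close>. The bisector of \<open>(i - 1, b)\<close> and \<open>(i, b + 1)\<close> is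
      that diagonal together with two closed quadrants containing these rays.\<close>
    have "bisector (a, b) (c, d) \<subseteq> bisector (i - 1, b) (i, b + 1)"
      using assms(1-4) False i unfolding bisector_def manhattan_def by (auto simp: abs_if split: if_splits)
    then show ?thesis
      using assms(1-4) False i unfolding locally_refined_def bounding_box_def manhattan_def
      by (intro exI[of _ "(i, b)"] exI[of _ "(i - 1, b)"] exI[of _ "(i, b + 1)"]) auto
  qed
qed

lemma locally_refined_isometry:
  assumes isometry: "\<And>w w'. manhattan (f w) (f w') = manhattan w w'"
    and involution: "\<And>w. f (f w) = w"
    and box: "\<And>w u v. f w \<in> bounding_box (f u) (f v) \<longleftrightarrow> w \<in> bounding_box u v"
    and "locally_refined (f u) (f v)"
  shows "locally_refined u v"
proof -
  obtain x p q where xpq: "x \<in> bounding_box (f u) (f v)" "p \<in> bounding_box (f u) (f v)"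
      "q \<in> bounding_box (f u) (f v)" "manhattan x p = 1" "manhattan x q = 1" "p \<noteq> q"
    and bis: "bisector (f u) (f v) \<subseteq> bisector p q"
    using assms(4) unfolding locally_refined_def by blast
  have "bisector u v \<subseteq> bisector (f p) (f q)"
  proof
    fix w assume "w \<in> bisector u v"
    then have "f w \<in> bisector (f u) (f v)"
      unfolding bisector_def by (simp add: isometry)
    then have "f w \<in> bisector p q"
      using bis by blast
    then show "w \<in> bisector (f p) (f q)"
      using isometry[of "f w"] involution unfolding bisector_def by simp
  qed
  moreover have "f x \<in> bounding_box u v" "f p \<in> bounding_box u v" "f q \<in> bounding_box u v"
    using xpq(1-3) box involution by metis+
  moreover have "manhattan (f x) (f p) = 1" "manhattan (f x) (f q) = 1" "f p \<noteq> f q"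
    using xpq(4-6) isometry involution by metis+
  ultimately show ?thesis
    unfolding locally_refined_def by blast
qed

lemma locally_refined_if_even:
  assumes "u \<noteq> v" "even (manhattan u v)"
  shows "locally_refined u v"
proof -
  have swap: "locally_refined u v" if "locally_refined (prod.swap u) (prod.swap v)" for u v
    using that by (rule locally_refined_isometry[rotated 3])
      (auto simp: manhattan_def bounding_box_def)
  have mirror: "locally_refined u v" if "locally_refined (apsnd uminus u) (apsnd uminus v)" for u v
    using that by (rule locally_refined_isometry[rotated 3])
      (auto simp: manhattan_def bounding_box_def abs_minus_commute)
  have ordered: "locally_refined (a, b) (c, d)"
    if "(a, b) \<noteq> (c, d)" "a \<le> c" "b \<le> d" "even (manhattan (a, b) (c, d))" for a b c d
  proof (cases "d - b \<le> c - a")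
    case True
    then show ?thesis using that locally_refined_dominant by blast
  next
    case False
    then have "locally_refined (b, a) (d, c)"
      using that by (intro locally_refined_dominant) (auto simp: manhattan_def)
    then show ?thesis using swap by simp
  qed
  have fst_ordered: "locally_refined (a, b) (c, d)"
    if "(a, b) \<noteq> (c, d)" "a \<le> c" "even (manhattan (a, b) (c, d))" for a b c d
  proof (cases "b \<le> d")
    case True
    then show ?thesis using that ordered by blast
  next
    case False
    then have "locally_refined (a, - b) (c, - d)"
      using that by (intro ordered) (auto simp: manhattan_def abs_minus_commute)
    then show ?thesis using mirror by simp
  qed
  obtain a b c d where "u = (a, b)" "v = (c, d)" by fastforce
  then show ?thesis
    using assms fst_ordered[of a b c d] fst_ordered[of c d a b] locally_refined_commute
    by (cases "a \<le> c") (auto simp: manhattan_def abs_minus_commute)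
qed

lemma grid_dist_eq_manhattan: "int (grid_dist u v) = manhattan (map_prod int int u) (map_prod int int v)"
  unfolding grid_dist_def manhattan_def by simp

lemma resolves_iff_not_in_bisector:
  "resolves w u v \<longleftrightarrow> map_prod int int w \<notin> bisector (map_prod int int u) (map_prod int int v)"
  unfolding resolves_def bisector_def by (simp flip: grid_dist_eq_manhattan)

lemma bounding_box_grid_vertices:
  assumes "u \<in> grid_vertices n m" "v \<in> grid_vertices n m"
    and "x \<in> bounding_box (map_prod int int u) (map_prod int int v)"
  shows "x \<in> map_prod int int ` grid_vertices n m"
proof
  show "x = map_prod int int (nat (fst x), nat (snd x))"
    using assms(3) by (auto simp: bounding_box_def)
  show "(nat (fst x), nat (snd x)) \<in> grid_vertices n m"
    using assms by (auto simp: bounding_box_def grid_vertices_def)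
qed

lemma locally_resolved_nonempty:
  assumes "3 \<le> n" "1 \<le> m" "locally_resolved n m R (1, 0)"
  shows "R \<noteq> {}"
proof -
  have "(0, 0) \<in> grid_neighbours n m (1, 0)" "(2, 0) \<in> grid_neighbours n m (1, 0)"
    using assms(1,2) by (auto simp: grid_neighbours_def grid_vertices_def grid_adj_def grid_dist_def)
  then show ?thesis
    using assms(3) unfolding locally_resolved_def by fastforce
qed

lemma resolved_if_locally_resolved:
  assumes "3 \<le> n" "1 \<le> m"
    and local: "\<forall>x \<in> grid_vertices n m. locally_resolved n m R x"
    and "u \<in> grid_vertices n m" "v \<in> grid_vertices n m" "u \<noteq> v"
  shows "\<exists>w \<in> R. resolves w u v"
proof (cases "even (manhattan (map_prod int int u) (map_prod int int v))")
  case True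
  moreover have "map_prod int int u \<noteq> map_prod int int v"
    using assms(6) by (cases u, cases v) auto
  ultimately obtain x p q where
    box: "x \<in> bounding_box (map_prod int int u) (map_prod int int v)"
      "p \<in> bounding_box (map_prod int int u) (map_prod int int v)"
      "q \<in> bounding_box (map_prod int int u) (map_prod int int v)"
    and adj: "manhattan x p = 1" "manhattan x q = 1" "p \<noteq> q"
    and bis: "bisector (map_prod int int u) (map_prod int int v) \<subseteq> bisector p q"
    using locally_refined_if_even unfolding locally_refined_def by blast
  obtain x' p' q' where "x' \<in> grid_vertices n m" "p' \<in> grid_vertices n m" "q' \<in> grid_vertices n m"
    and "x = map_prod int int x'" "p = map_prod int int p'" "q = map_prod int int q'"
    using box[THEN bounding_box_grid_vertices[OF assms(4,5)]] by (elim imageE) simp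
  moreover from this have "p' \<in> grid_neighbours n m x'" "q' \<in> grid_neighbours n m x'" "p' \<noteq> q'"
    using adj by (auto simp: grid_neighbours_def grid_adj_def grid_dist_eq_manhattan[symmetric])
  ultimately obtain w where "w \<in> R" "resolves w p' q'"
    using local unfolding locally_resolved_def by blast
  then show ?thesis
    using bis \<open>p = map_prod int int p'\<close> \<open>q = map_prod int int q'\<close>
    by (auto simp: resolves_iff_not_in_bisector)
next
  case False
  then have "resolves w u v" for w
    by (simp add: resolves_iff_not_in_bisector bisector_empty_if_odd)
  moreover have "R \<noteq> {}"
    using local assms(1,2) by (intro locally_resolved_nonempty) (auto simp: grid_vertices_def)
  ultimately show ?thesis by blast
qed

theorem theorem3:
  fixes n m :: nat and R :: "(nat \<times> nat) set"
  assumes "n \<ge> 3" and "m \<ge> 3"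
    and "R \<subseteq> grid_vertices n m"
    and "\<forall>x \<in> grid_vertices n m. locally_resolved n m R x"
  shows "resolving_set n m R"
  unfolding resolving_set_def
  using assms resolved_if_locally_resolved[of n m R] by simp

end
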